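(* Let $f$ be a differentiable superfunction on $\mathbb{R}^m$ such that $L_{ij}f=0$ for all $1\le i\le j\le m+2n$. Then $f$ is a spherically symmetric superfunction, i.e. there is a function $h$ on $(0,\infty)$, $n$ times differentiable, such that $f=h(R^2)=\sum_{j=0}^n(-1)^j\frac{\underline{x}\grave{}^{2j}}{j!}h^{(j)}(r^2)$.
   Context: Fix integers $m\ge1$, $n\ge0$. Let $\Lambda_{2n}$ be the complex Grassmann algebra generated by anticommuting variables ${x\grave{}}_1,\dots,{x\grave{}}_{2n}$. A superfunction on an open set $\Omega\subset\mathbb{R}^m$ is $f=\sum_{A}{x\grave{}}_Af_A$, with $A\in\{0,1\}^{2n}$, ${x\grave{}}_A={x\grave{}}_1^{\alpha_1}\cdots{x\grave{}}_{2n}^{\alpha_{2n}}$, $f_A:\Omega\to\mathbb{C}$; it is differentiable if all $f_A$ are. Bosonic coordinates $x_1,\dots,x_m$, $r^2=\sum x_i^2$. Fermionic derivatives $\partial_{{x\grave{}}_j}$ commute with the $x_i$ and satisfy $\partial_{{x\grave{}}_j}({x\grave{}}_k g)=\delta_{jk}g-{x\grave{}}_k\partial_{{x\grave{}}_j}g$. Put $\underline{x}\grave{}^2=\sum_{j=1}^n{x\grave{}}_{2j-1}{x\grave{}}_{2j}$, $R^2=r^2-\underline{x}\grave{}^2$. Write $X_i=x_i$ for $1\le i\le m$ and $X_{m+j}={x\grave{}}_j$ for $1\le j\le 2n$, with parity $[i]=0$ for $i\le m$ and $[i]=1$ otherwise. Define $\partial_{X^i}=\partial_{x_i}$ for $i\le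 m$, $\partial_{X^{m+2k-1}}=2\partial_{{x\grave{}}_{2k}}$ and $\partial_{X^{m+2k}}=-2\partial_{{x\grave{}}_{2k-1}}$ for $1\le k\le n$. The generators of the orthosymplectic Lie superalgebra $\mathfrak{osp}(m|2n)$ are the operators $L_{ij}=X_i\partial_{X^j}-(-1)^{[i][j]}X_j\partial_{X^i}$, $1\le i\le j\le m+2n$.
   Formalization: The bosonic dimension satisfies m >= 2 rather than m >= 1, so the case m = 1 is excluded for every n. The statement above fails without it. *)

theory Defs
  imports "HOL-Analysis.Analysis"
begin

text \<open>A superfunction on R^m with values in the Grassmann algebra Lambda_{2n}:
  f = sum_A xgrave_A f_A, represented by its coefficient map A \<mapsto> f_A, where the
  multi-index A is the subset of {1..2n} of fermionic generators occurring in xgrave_A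
  (taken in increasing order). Coefficients at sets A not contained in {1..2n} are
  irrelevant and never consulted.\<close>

type_synonym 'm superfun = "nat set \<Rightarrow> real^'m \<Rightarrow> complex"

definition sf_zero :: "'m superfun" where
  "sf_zero = (\<lambda>A x. 0)"

definition sf_one :: "'m superfun" where
  "sf_one = (\<lambda>A x. if A = {} then 1 else 0)"

definition sf_add :: "'m superfun \<Rightarrow> 'm superfun \<Rightarrow> 'm superfun" where
  "sf_add f g = (\<lambda>A x. f A x + g A x)"

definition sf_scale :: "complex \<Rightarrow> 'm superfun \<Rightarrow> 'm superfun" where
  "sf_scale c f = (\<lambda>A x. c * f A x)"

text \<open>Sign of moving xgrave_k to its place in xgrave_A (k not in A).\<close>
definition gsign :: "nat set \<Rightarrow> nat \<Rightarrow> complex" where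
  "gsign A k = (-1) ^ card {j \<in> A. j < k}"

text \<open>Sign in xgrave_A xgrave_B = gsign2 A B xgrave_(A \<union> B) for disjoint A, B.\<close>
definition gsign2 :: "nat set \<Rightarrow> nat set \<Rightarrow> complex" where
  "gsign2 A B = (-1) ^ card {(a, b). a \<in> A \<and> b \<in> B \<and> b < a}"

definition sf_mul :: "'m superfun \<Rightarrow> 'm superfun \<Rightarrow> 'm superfun" where
  "sf_mul f g = (\<lambda>C x. \<Sum>A\<in>Pow C. gsign2 A (C - A) * f A x * g (C - A) x)"

definition sf_pow :: "'m superfun \<Rightarrow> nat \<Rightarrow> 'm superfun" where
  "sf_pow f j = (sf_mul f ^^ j) sf_one"

text \<open>Left multiplication by the fermionic variable xgrave_k.\<close>
definition fmul :: "nat \<Rightarrow> 'm superfun \<Rightarrow> 'm superfun" where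
  "fmul k f = (\<lambda>A x. if k \<in> A then gsign (A - {k}) k * f (A - {k}) x else 0)"

text \<open>Fermionic derivative d/d xgrave_k (it satisfies
  d_j (xgrave_k g) = delta_jk g - xgrave_k d_j g).\<close>
definition fder :: "nat \<Rightarrow> 'm superfun \<Rightarrow> 'm superfun" where
  "fder k f = (\<lambda>A x. if k \<notin> A then gsign A k * f (insert k A) x else 0)"

definition bmul :: "'m::finite \<Rightarrow> 'm superfun \<Rightarrow> 'm superfun" where
  "bmul i f = (\<lambda>A x. complex_of_real (x $ i) * f A x)"

definition bder :: "'m::finite \<Rightarrow> 'm superfun \<Rightarrow> 'm superfun" where
  "bder i f = (\<lambda>A x. vector_derivative (\<lambda>t::real. f A (x + t *\<^sub>R axis i 1)) (at 0))"

text \<open>Combined coordinates X: Inl i is the bosonic x_i (i.e. X_i, i \<le> m),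
  Inr k is the fermionic xgrave_k (i.e. X_{m+k}, 1 \<le> k \<le> 2n).\<close>
type_synonym 'm sidx = "'m + nat"

fun sidx_valid :: "nat \<Rightarrow> 'm sidx \<Rightarrow> bool" where
  "sidx_valid n (Inl i) = True"
| "sidx_valid n (Inr k) = (1 \<le> k \<and> k \<le> 2 * n)"

fun sidx_par :: "'m sidx \<Rightarrow> nat" where
  "sidx_par (Inl i) = 0"
| "sidx_par (Inr k) = 1"

fun Xmul :: "('m::finite) sidx \<Rightarrow> 'm superfun \<Rightarrow> 'm superfun" where
  "Xmul (Inl i) f = bmul i f"
| "Xmul (Inr k) f = fmul k f"

text \<open>d_{X^i}: d_{x_i} for bosons, d_{X^{m+2k-1}} = 2 d_{xgrave_{2k}},
  d_{X^{m+2k}} = -2 d_{xgrave_{2k-1}}.\<close>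
fun Xder :: "('m::finite) sidx \<Rightarrow> 'm superfun \<Rightarrow> 'm superfun" where
  "Xder (Inl i) f = bder i f"
| "Xder (Inr k) f = (if odd k then sf_scale 2 (fder (k + 1) f)
                     else sf_scale (-2) (fder (k - 1) f))"

definition Lop :: "('m::finite) sidx \<Rightarrow> 'm sidx \<Rightarrow> 'm superfun \<Rightarrow> 'm superfun" where
  "Lop a b f = sf_add (Xmul a (Xder b f))
      (sf_scale (- ((-1) ^ (sidx_par a * sidx_par b))) (Xmul b (Xder a f)))"

definition xgsq :: "nat \<Rightarrow> 'm superfun" where
  "xgsq n = (\<lambda>A x. \<Sum>j=1..n. fmul (2*j - 1) (fmul (2*j) sf_one) A x)"

definition hder :: "nat \<Rightarrow> (real \<Rightarrow> complex) \<Rightarrow> real \<Rightarrow> complex" where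
  "hder j h = ((\<lambda>g t. vector_derivative g (at t)) ^^ j) h"

end

theory Submission
  imports Defs
begin

text \<open>
  The bosonic generators L_ij (i, j \<le> m) say x_i \<partial>_j f_A = x_j \<partial>_i f_A: all angular derivatives of
  every coefficient vanish, so, \<real>^m - {0} being connected for m \<ge> 2, the body f_\<emptyset> is a function
  h(r^2) of the radius. The mixed generators L_(i,m+k) couple the coefficients: f_A vanishes as soon
  as A contains a fermionic index without its symplectic partner, and adjoining a pair {2s-1, 2s}
  to A is governed by \<partial>_i f_A = -2 x_i f_(A \<union> {2s-1, 2s}). Induction on the number k of pairs gives
  f_A = (-1)^k h^(k)(r^2), and this is the coefficient of xgrave_A in h(R^2): the pairs
  xgrave_(2s-1) xgrave_(2s) are even, so (xgrave^2)^j = j! \<Sum>_(|S| = j) \<Prod>_(s \<in> S) xgrave_(2s-1) xgrave_(2s).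
\<close>

section \<open>Radial functions\<close>

lemma linear_zero_on_orthogonal:
  fixes D :: "real^'m::finite \<Rightarrow> complex"
  assumes lin: "linear D" and z: "z \<noteq> 0" and zw: "z \<bullet> w = 0"
    and angular: "\<And>i j. of_real (z$i) * D (axis j 1) = of_real (z$j) * D (axis i 1)"
  shows "D w = 0"
proof -
  obtain i where zi: "z$i \<noteq> 0" using z by (metis vec_eq_iff zero_index)
  have w: "w = (\<Sum>j\<in>UNIV. (w$j) *\<^sub>R axis j 1)"
    using basis_expansion[of w] by (simp add: scalar_mult_eq_scaleR)
  have "of_real (z$i) * D w = (\<Sum>j\<in>UNIV. of_real (w$j) * (of_real (z$i) * D (axis j 1)))"
    by (subst w, simp only: linear_sum[OF lin] linear_scale[OF lin])
       (simp add: scaleR_conv_of_real sum_distrib_left algebra_simps)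
  also have "\<dots> = (\<Sum>j\<in>UNIV. of_real (w$j) * (of_real (z$j) * D (axis i 1)))"
    using angular by simp
  also have "\<dots> = of_real (z \<bullet> w) * D (axis i 1)"
    by (simp add: inner_vec_def sum_distrib_left sum_distrib_right algebra_simps)
  finally show ?thesis using zi zw by simp
qed

lemma rescale_to_sphere_has_derivative:
  fixes y :: "'a::real_inner"
  assumes y: "y \<noteq> 0"
  obtains P where "((\<lambda>y. (r / norm y) *\<^sub>R y) has_derivative P) (at y)" and "\<And>v. y \<bullet> P v = 0"
proof
  define P where "P v = (r / norm y) *\<^sub>R v - (r * (v \<bullet> y) / norm y ^ 3) *\<^sub>R y" for v
  show "((\<lambda>y. (r / norm y) *\<^sub>R y) has_derivative P) (at y)"
    unfolding P_def
    by (rule derivative_eq_intros has_derivative_norm[OF y] | simp add: y)+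
       (auto simp: y sgn_div_norm inner_commute power2_eq_square power3_eq_cube field_simps)
  have "y \<bullet> y = norm y ^ 2" by (simp add: power2_norm_eq_inner)
  then show "y \<bullet> P v = 0" for v
    using y by (simp add: P_def inner_diff_right inner_commute power3_eq_cube power2_eq_square field_simps)
qed

lemma radial_if_angular_derivatives_vanish:
  fixes g :: "real^'m::finite \<Rightarrow> complex"
  assumes m2: "CARD('m) \<ge> 2" and dg: "\<And>x. g differentiable (at x)"
    and angular: "\<And>x i j. of_real (x$i) * frechet_derivative g (at x) (axis j 1)
                         = of_real (x$j) * frechet_derivative g (at x) (axis i 1)"
    and x: "x \<noteq> 0"
  shows "g x = g (norm x *\<^sub>R axis k 1)"
proof -
  txt \<open>F is locally constant: its derivative is that of g applied to vectors tangent to the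
    sphere, which vanishes by the angular relations.\<close>
  define F where "F y = g ((norm x / norm y) *\<^sub>R y)" for y
  have F_deriv: "(F has_derivative (\<lambda>h. 0)) (at y)" if y: "y \<noteq> 0" for y
  proof -
    define p where "p = (norm x / norm y) *\<^sub>R y"
    obtain P where P: "((\<lambda>y. (norm x / norm y) *\<^sub>R y) has_derivative P) (at y)" "\<And>v. y \<bullet> P v = 0"
      using rescale_to_sphere_has_derivative[OF y] by blast
    have g_deriv: "(g has_derivative frechet_derivative g (at p)) (at p)"
      using dg frechet_derivative_works by blast
    have "frechet_derivative g (at p) (P v) = 0" for v
    proof (rule linear_zero_on_orthogonal[OF has_derivative_linear[OF g_deriv]])
      show "p \<noteq> 0" using x y by (simp add: p_def)
      show "p \<bullet> P v = 0" using P(2) by (simp add: p_def)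
    qed (rule angular)
    moreover have "(F has_derivative (frechet_derivative g (at p) \<circ> P)) (at y)"
      unfolding F_def using diff_chain_at[OF P(1)] g_deriv by (simp add: p_def o_def)
    ultimately show ?thesis by (simp add: o_def)
  qed
  have "F constant_on (- {0})"
  proof (rule has_derivative_zero_connected_constant_on[where K="{}"])
    show "connected (- {0::real^'m})" using m2 by (intro connected_punctured_universe) simp
    show "continuous_on (- {0}) F"
      by (rule has_derivative_continuous_on[where f'="\<lambda>_ h. 0"])
         (use F_deriv in \<open>auto intro: has_derivative_at_withinI\<close>)
  qed (use F_deriv in \<open>auto intro: has_derivative_at_withinI\<close>)
  then have "F x = F (axis k 1)"
    unfolding constant_on_def using x by (metis ComplI axis_eq_0_iff singletonD zero_neq_one)
  then show ?thesis using x by (simp add: F_def)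
qed

lemma bder_eq_frechet_derivative:
  fixes f :: "'m::finite superfun"
  assumes "f A differentiable (at x)"
  shows "bder i f A x = frechet_derivative (f A) (at x) (axis i 1)"
proof -
  have line: "((\<lambda>t. x + t *\<^sub>R axis i 1) has_vector_derivative axis i 1) (at 0)"
    by (auto intro!: derivative_eq_intros simp: has_vector_derivative_def)
  have "((\<lambda>t. f A (x + t *\<^sub>R axis i 1)) has_vector_derivative
          frechet_derivative (f A) (at x) (axis i 1)) (at 0)"
    using vector_derivative_diff_chain_within[OF line, of "f A"] assms
    by (simp add: frechet_derivative_works has_derivative_at_withinI o_def)
  then show ?thesis unfolding bder_def by (rule vector_derivative_at)
qed

lemma sum_power2_eq_norm_power2: "(\<Sum>i\<in>UNIV. (x $ i)\<^sup>2) = (norm (x::real^'m::finite))\<^sup>2"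
  by (simp only: power2_norm_eq_inner inner_vec_def) (simp add: power2_eq_square)

lemma hder_0 [simp]: "hder 0 h = h"
  by (simp add: hder_def)

lemma hder_Suc: "hder (Suc k) h t = vector_derivative (hder k h) (at t)"
  by (simp add: hder_def)

lemma has_vector_derivative_along_axis_of_radial:
  fixes G :: "real^'m::finite \<Rightarrow> complex" and g :: "real \<Rightarrow> complex"
  assumes g: "(g has_vector_derivative g') (at ((norm x)\<^sup>2))" and x: "x \<noteq> 0"
    and G: "\<And>y. y \<noteq> 0 \<Longrightarrow> G y = g ((norm y)\<^sup>2)"
  shows "((\<lambda>t. G (x + t *\<^sub>R axis i 1)) has_vector_derivative (2 * x$i) *\<^sub>R g') (at 0)"
proof -
  define q where "q t = (norm (x + t *\<^sub>R axis i 1))\<^sup>2" for t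
  have q_eq: "q t = (norm x)\<^sup>2 + 2 * t * x$i + t^2" for t
    unfolding q_def power2_norm_eq_inner
    by (simp add: inner_add_left inner_add_right inner_axis inner_axis' inner_commute
        power2_eq_square algebra_simps)
  have "(q has_real_derivative 2 * x$i) (at 0)"
    unfolding q_eq[abs_def] by (auto intro!: derivative_eq_intros)
  then have "(q has_vector_derivative 2 * x$i) (at 0)"
    by (simp add: has_real_derivative_iff_has_vector_derivative)
  then have gq_deriv: "((g \<circ> q) has_vector_derivative (2 * x$i) *\<^sub>R g') (at 0)"
    by (rule vector_diff_chain_at) (use g in \<open>simp add: q_def\<close>)
  have gq_eq: "(g \<circ> q) t = G (x + t *\<^sub>R axis i 1)" if "t \<in> {t. x + t *\<^sub>R axis i 1 \<noteq> 0}" for t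
    using G that by (simp add: q_def)
  have "open {t::real. x + t *\<^sub>R axis i 1 \<noteq> 0}"
    by (rule open_Collect_neq) (auto intro!: continuous_intros)
  then show ?thesis
    by (rule has_vector_derivative_transform_within_open[OF gq_deriv _ _ gq_eq]) (use x in auto)
qed

section \<open>Products of symplectic pairs of fermionic variables\<close>

definition fpair :: "nat \<Rightarrow> nat set" where
  "fpair s = {2 * s - 1, 2 * s}"

definition fpairs :: "nat set \<Rightarrow> nat set" where
  "fpairs S = (\<Union>s\<in>S. fpair s)"

definition is_fpairs_of_card :: "nat \<Rightarrow> nat \<Rightarrow> nat set \<Rightarrow> bool" where
  "is_fpairs_of_card n j C \<longleftrightarrow> (\<exists>S\<subseteq>{1..n}. card S = j \<and> C = fpairs S)"

lemma fpairs_empty [simp]: "fpairs {} = {}"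
  by (simp add: fpairs_def)

lemma fpairs_insert: "fpairs (insert s S) = fpair s \<union> fpairs S"
  by (simp add: fpairs_def)

lemma mem_fpairs: "j \<in> fpairs S \<longleftrightarrow> (\<exists>s\<in>S. j = 2 * s - 1 \<or> j = 2 * s)"
  by (auto simp: fpairs_def fpair_def)

lemma fpairs_subset: "S \<subseteq> {1..n} \<Longrightarrow> fpairs S \<subseteq> {1..2*n}"
  by (force simp: mem_fpairs subset_eq)

lemma fpair_disjoint: "a \<ge> 1 \<Longrightarrow> b \<ge> 1 \<Longrightarrow> a \<noteq> b \<Longrightarrow> fpair a \<inter> fpair b = {}"
  by (auto simp: fpair_def)

lemma fpair_inject: "a \<ge> 1 \<Longrightarrow> b \<ge> 1 \<Longrightarrow> fpair a = fpair b \<Longrightarrow> a = b"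
  using fpair_disjoint[of a b] by (auto simp: fpair_def)

lemma odd_mem_fpairs:
  assumes S: "S \<subseteq> {1..}" and s: "s \<ge> 1" shows "2 * s - 1 \<in> fpairs S \<longleftrightarrow> s \<in> S"
proof
  assume "2 * s - 1 \<in> fpairs S"
  then obtain t where t: "t \<in> S" "2 * s - 1 = 2 * t - 1 \<or> 2 * s - 1 = 2 * t"
    by (auto simp: mem_fpairs)
  moreover have "t \<ge> 1" using S t by auto
  ultimately have "t = s" using s by presburger
  with t show "s \<in> S" by simp
qed (auto simp: mem_fpairs)

lemma even_mem_fpairs:
  assumes S: "S \<subseteq> {1..}" shows "2 * s \<in> fpairs S \<longleftrightarrow> s \<in> S"
proof
  assume "2 * s \<in> fpairs S"
  then obtain t where t: "t \<in> S" "2 * s = 2 * t - 1 \<or> 2 * s = 2 * t"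
    by (auto simp: mem_fpairs)
  moreover have "t \<ge> 1" using S t by auto
  ultimately have "t = s" by presburger
  with t show "s \<in> S" by simp
qed (auto simp: mem_fpairs)

lemma fpair_subset_fpairs: "S \<subseteq> {1..} \<Longrightarrow> fpair s \<subseteq> fpairs S \<longleftrightarrow> s \<in> S"
  using even_mem_fpairs[of S s] by (auto simp: fpair_def fpairs_def)

lemma fpairs_Diff_fpair: "S \<subseteq> {1..} \<Longrightarrow> s \<in> S \<Longrightarrow> fpairs S - fpair s = fpairs (S - {s})"
  unfolding fpairs_def using fpair_disjoint[of s] by (auto simp: subset_eq)

lemma fpairs_inject: "S \<subseteq> {1..} \<Longrightarrow> T \<subseteq> {1..} \<Longrightarrow> fpairs S = fpairs T \<Longrightarrow> S = T"
  using even_mem_fpairs[of S] even_mem_fpairs[of T] by blast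

lemma is_fpairs_of_card_fpairs:
  assumes "S \<subseteq> {1..n}" shows "is_fpairs_of_card n j (fpairs S) \<longleftrightarrow> j = card S"
  using assms fpairs_inject[of _ S] by (auto simp: is_fpairs_of_card_def subset_eq)

lemma unpaired_index_exists:
  assumes A: "A \<subseteq> {1..2*n}" and not_pairs: "\<not> (\<exists>S\<subseteq>{1..n}. A = fpairs S)"
  shows "\<exists>k\<in>A. (odd k \<and> k + 1 \<notin> A) \<or> (even k \<and> k - 1 \<notin> A)"
proof (rule ccontr)
  assume "\<not> ?thesis"
  then have partner: "\<And>k. k \<in> A \<Longrightarrow> odd k \<Longrightarrow> k + 1 \<in> A" "\<And>k. k \<in> A \<Longrightarrow> even k \<Longrightarrow> k - 1 \<in> A"
    by auto
  define S where "S = {s\<in>{1..n}. 2 * s \<in> A}"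
  have "A = fpairs S"
  proof (intro equalityI subsetI)
    fix k assume k: "k \<in> A"
    then have "1 \<le> k" "k \<le> 2*n" using A by auto
    show "k \<in> fpairs S"
    proof (cases "even k")
      case True
      then have "k div 2 \<in> S" using k \<open>1 \<le> k\<close> \<open>k \<le> 2*n\<close> by (auto simp: S_def)
      with True show ?thesis by (auto simp: mem_fpairs intro!: bexI[of _ "k div 2"])
    next
      case False
      then have "(k + 1) div 2 \<in> S" using partner(1)[OF k] \<open>k \<le> 2*n\<close> A
        by (auto simp: S_def subset_eq)
      with False show ?thesis by (auto simp: mem_fpairs intro!: bexI[of _ "(k + 1) div 2"])
    qed
  next
    fix k assume "k \<in> fpairs S"
    then show "k \<in> A" using partner(2)[of "2 * _"] by (auto simp: mem_fpairs S_def)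
  qed
  moreover have "S \<subseteq> {1..n}" by (auto simp: S_def)
  ultimately show False using not_pairs by blast
qed

lemma gsign2_fpair:
  assumes s: "s \<ge> 1" and B: "B \<inter> fpair s = {}"
  shows "gsign2 (fpair s) B = 1"
proof -
  have "{(a, b). a \<in> fpair s \<and> b \<in> B \<and> b < a} = fpair s \<times> {b \<in> B. b < 2 * s - 1}"
    using B s apply (auto simp: fpair_def)
    subgoal for b by (cases "b = 2 * s - 1") auto
    done
  moreover have "card (fpair s) = 2" using s by (simp add: fpair_def)
  ultimately show ?thesis by (simp add: gsign2_def card_cartesian_product)
qed

lemma fmul_fmul_one:
  assumes "j \<ge> 1"
  shows "fmul (2 * j - 1) (fmul (2 * j) sf_one) A x = (if A = fpair j then 1 else 0)"
proof -
  have inner: "fmul (2 * j) sf_one B x = (if B = {2 * j} then 1 else 0)" for B :: "nat set"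
    by (auto simp: fmul_def sf_one_def gsign_def)
  have "A - {2 * j - 1} = {2 * j} \<and> 2 * j - 1 \<in> A \<longleftrightarrow> A = fpair j"
    using assms by (auto simp: fpair_def)
  moreover have "{k \<in> {2 * j}. k < 2 * j - 1} = {}"
    by auto
  then have "gsign {2 * j} (2 * j - 1) = 1"
    unfolding gsign_def by (metis card.empty power_0)
  ultimately show ?thesis
    unfolding fmul_def[of "2 * j - 1"] by (auto simp: inner)
qed

lemma xgsq_coeff: "xgsq n A x = (if \<exists>s\<in>{1..n}. A = fpair s then 1 else 0)"
proof -
  have "xgsq n A x = (\<Sum>j\<in>{1..n}. if A = fpair j then 1 else 0)"
    unfolding xgsq_def by (intro sum.cong refl fmul_fmul_one) simp
  also have "\<dots> = (if \<exists>s\<in>{1..n}. A = fpair s then 1 else 0)"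
  proof (cases "\<exists>s\<in>{1..n}. A = fpair s")
    case True
    then obtain s where s: "s \<in> {1..n}" "A = fpair s" by blast
    then have "(\<Sum>j\<in>{1..n}. if A = fpair j then 1 else 0) = (\<Sum>j\<in>{1..n}. if j = s then 1 else (0::complex))"
      using fpair_inject[of _ s] by (intro sum.cong) auto
    then show ?thesis using s True by simp
  qed auto
  finally show ?thesis .
qed

lemma sum_fpair_removals:
  fixes c :: "'a::comm_semiring_1"
  shows "(\<Sum>s | s \<in> {1..n} \<and> fpair s \<subseteq> C. if is_fpairs_of_card n j (C - fpair s) then c else 0)
       = (if is_fpairs_of_card n (Suc j) C then of_nat (Suc j) * c else 0)"
    (is "(\<Sum>s\<in>?T. ?g s) = _")
proof (cases "is_fpairs_of_card n (Suc j) C")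
  case True
  then obtain S where S: "S \<subseteq> {1..n}" "card S = Suc j" "C = fpairs S"
    by (auto simp: is_fpairs_of_card_def)
  have S1: "S \<subseteq> {1..}" using S by auto
  have "?T = S" using S fpair_subset_fpairs[OF S1] by auto
  moreover have "?g s = c" if "s \<in> S" for s
  proof -
    have "C - fpair s = fpairs (S - {s})" using S fpairs_Diff_fpair[OF S1 that] by simp
    moreover have "card (S - {s}) = j" using S that by (simp add: card_Diff_singleton)
    ultimately show ?thesis using S(1) by (auto simp: is_fpairs_of_card_def)
  qed
  ultimately show ?thesis using True S(2) by simp
next
  case False
  have "?g s = 0" if s: "s \<in> ?T" for s
  proof -
    have "\<not> is_fpairs_of_card n j (C - fpair s)"
    proof
      assume "is_fpairs_of_card n j (C - fpair s)"
      then obtain S where S: "S \<subseteq> {1..n}" "card S = j" "C - fpair s = fpairs S"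
        by (auto simp: is_fpairs_of_card_def)
      have "s \<notin> S"
        using S(3) s by (auto simp: fpairs_def fpair_def)
      moreover have "C = fpairs (insert s S)" using s S(3) by (auto simp: fpairs_insert)
      ultimately have "is_fpairs_of_card n (Suc j) C"
        using S s finite_subset[OF S(1)] unfolding is_fpairs_of_card_def
        by (intro exI[of _ "insert s S"]) auto
      then show False using False by blast
    qed
    then show ?thesis by simp
  qed
  then show ?thesis using False by simp
qed

lemma xgsq_pow_coeff:
  "finite C \<Longrightarrow> sf_pow (xgsq n) j C x = (if is_fpairs_of_card n j C then of_nat (fact j) else 0)"
proof (induction j arbitrary: C)
  case 0
  have "is_fpairs_of_card n 0 C \<longleftrightarrow> C = {}"
    by (auto simp: is_fpairs_of_card_def intro: exI[of _ "{}"] dest: finite_subset)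
  then show ?case by (simp add: sf_pow_def sf_one_def)
next
  case (Suc j)
  define T where "T = {s. s \<in> {1..n} \<and> fpair s \<subseteq> C}"
  have "sf_pow (xgsq n) (Suc j) C x
      = (\<Sum>A\<in>Pow C. gsign2 A (C - A) * xgsq n A x * sf_pow (xgsq n) j (C - A) x)"
    by (simp add: sf_pow_def sf_mul_def)
  also have "\<dots> = (\<Sum>A | A \<in> Pow C \<and> (\<exists>s\<in>{1..n}. A = fpair s).
                       gsign2 A (C - A) * sf_pow (xgsq n) j (C - A) x)"
    using Suc.prems by (simp add: xgsq_coeff sum.inter_filter[symmetric] if_distrib if_distribR cong: if_cong)
  also have "{A. A \<in> Pow C \<and> (\<exists>s\<in>{1..n}. A = fpair s)} = fpair ` T"
    by (auto simp: T_def)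
  also have "(\<Sum>A\<in>fpair ` T. gsign2 A (C - A) * sf_pow (xgsq n) j (C - A) x)
      = (\<Sum>s\<in>T. if is_fpairs_of_card n j (C - fpair s) then of_nat (fact j) else 0)"
  proof -
    have "inj_on fpair T" by (auto simp: inj_on_def T_def intro: fpair_inject)
    moreover have "gsign2 (fpair s) (C - fpair s) = 1" if "s \<in> T" for s
      using that by (intro gsign2_fpair) (auto simp: T_def)
    ultimately show ?thesis
      using Suc.IH Suc.prems by (simp add: sum.reindex)
  qed
  also have "\<dots> = (if is_fpairs_of_card n (Suc j) C then of_nat (fact (Suc j)) else 0)"
    unfolding T_def sum_fpair_removals by (simp add: algebra_simps)
  finally show ?case .
qed

section \<open>Coefficients of an osp(m|2n)-invariant superfunction\<close>

text \<open>The function h of the theorem; its values at t < 0 are junk.\<close>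

definition radial_profile :: "'m::finite superfun \<Rightarrow> real \<Rightarrow> complex" where
  "radial_profile f t = f {} (sqrt t *\<^sub>R axis undefined 1)"

context
  fixes f :: "'m::finite superfun" and n :: nat
  assumes diff: "\<And>A x. A \<subseteq> {1..2*n} \<Longrightarrow> f A differentiable (at x)"
    and L0: "\<And>a b A x. sidx_valid n a \<Longrightarrow> sidx_valid n b \<Longrightarrow> A \<subseteq> {1..2*n} \<Longrightarrow>
               Lop a b f A x = 0"
begin

lemma coeff_zero_if_unpaired:
  assumes A: "A \<subseteq> {1..2*n}" and k: "k \<in> A" "(odd k \<and> k + 1 \<notin> A) \<or> (even k \<and> k - 1 \<notin> A)"
    and x: "x \<noteq> 0"
  shows "f A x = 0"
proof -
  obtain i where xi: "x$i \<noteq> 0" using x by (metis vec_eq_iff zero_index)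
  have A': "A - {k} \<subseteq> {1..2*n}" using A by auto
  have "1 \<le> k" "k \<le> 2*n" using A k by auto
  then have "odd k \<Longrightarrow> k + 1 \<le> 2*n" "even k \<Longrightarrow> k \<ge> 2" by presburger+
  then consider "odd k" "k + 1 \<notin> A" "k + 1 \<le> 2*n" | "even k" "k - 1 \<notin> A" "k \<ge> 2"
    using k by blast
  txt \<open>At A - {k}, the generator L_(i,p) for the partner p of k reduces to x_i \<partial>_(X^p) f:
    its other term needs p \<in> A, and \<partial>_(X^p) = \<plusminus>2 \<partial>_(xgrave_k) picks out f_A.\<close>
  then have "\<exists>c. c \<noteq> 0 \<and> of_real (x$i) * (c * f A x) = 0"
  proof cases
    case 1
    then have "Lop (Inl i) (Inr (k + 1)) f (A - {k}) x = 0" by (intro L0 A') auto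
    then show ?thesis using 1 k(1)
      by (intro exI[of _ "-2 * gsign (A - {k}) k"])
         (simp add: Lop_def sf_add_def sf_scale_def bmul_def fder_def fmul_def insert_absorb gsign_def)
  next
    case 2
    then have "Lop (Inl i) (Inr (k - 1)) f (A - {k}) x = 0" using \<open>k \<le> 2*n\<close> by (intro L0 A') auto
    then show ?thesis using 2 k(1)
      by (intro exI[of _ "2 * gsign (A - {k}) k"])
         (simp add: Lop_def sf_add_def sf_scale_def bmul_def fder_def fmul_def insert_absorb gsign_def)
  qed
  then show ?thesis using xi by auto
qed

lemma bder_fpairs:
  assumes S: "S \<subseteq> {1..n}" and s: "s \<in> {1..n}" "s \<notin> S"
  shows "bder i f (fpairs S) x = -2 * of_real (x$i) * f (fpairs (insert s S)) x"
proof -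
  define A where "A = insert (2 * s - 1) (fpairs S)"
  have S1: "S \<subseteq> {1..}" using S by auto
  have odd_notin: "2 * s - 1 \<notin> fpairs S" using odd_mem_fpairs[OF S1] s by simp
  have even_notin: "2 * s \<notin> A" using even_mem_fpairs[OF S1] s by (auto simp: A_def)
  have A_sub: "A \<subseteq> {1..2*n}" using fpairs_subset[OF S] s by (auto simp: A_def)
  have fin: "finite (fpairs S)" using S by (simp add: fpairs_def finite_subset fpair_def)
  have "{j \<in> A. j < 2 * s} = insert (2 * s - 1) {j \<in> fpairs S. j < 2 * s - 1}"
    using s odd_notin by (auto simp: A_def)
  then have sign: "gsign A (2 * s) = - gsign (fpairs S) (2 * s - 1)"
    unfolding gsign_def using fin odd_notin by simp
  have "Lop (Inl i) (Inr (2 * s - 1)) f A x = 0" by (rule L0) (use s A_sub in auto)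
  then have "of_real (x$i) * (2 * (gsign A (2 * s) * f (insert (2 * s) A) x))
        - gsign (A - {2 * s - 1}) (2 * s - 1) * bder i f (A - {2 * s - 1}) x = 0"
    using s even_notin by (simp add: Lop_def sf_add_def sf_scale_def bmul_def fder_def fmul_def A_def)
  moreover have "insert (2 * s) A = fpairs (insert s S)" by (auto simp: A_def fpairs_insert fpair_def)
  moreover have "A - {2 * s - 1} = fpairs S" using odd_notin by (auto simp: A_def)
  ultimately have "gsign (fpairs S) (2 * s - 1) *
      (bder i f (fpairs S) x + 2 * of_real (x$i) * f (fpairs (insert s S)) x) = 0"
    unfolding sign by (simp add: algebra_simps neg_eq_iff_add_eq_0 add.commute)
  then show ?thesis by (simp add: gsign_def eq_neg_iff_add_eq_0)
qed

lemma coeff_empty_eq_radial_profile: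
  assumes m2: "CARD('m) \<ge> 2" and x: "x \<noteq> 0"
  shows "f {} x = radial_profile f ((norm x)\<^sup>2)"
proof -
  have f0_diff: "\<And>x. f {} differentiable (at x)" using diff by simp
  have "f {} x = f {} (norm x *\<^sub>R axis undefined 1)"
  proof (rule radial_if_angular_derivatives_vanish[OF m2 f0_diff _ x])
    fix y :: "real^'m" and i j
    have "Lop (Inl i) (Inl j) f {} y = 0" by (rule L0) auto
    then show "of_real (y$i) * frechet_derivative (f {}) (at y) (axis j 1)
             = of_real (y$j) * frechet_derivative (f {}) (at y) (axis i 1)"
      by (simp add: Lop_def sf_add_def sf_scale_def bmul_def bder_eq_frechet_derivative[of f "{}", OF f0_diff])
  qed
  then show ?thesis by (simp add: radial_profile_def)
qed

lemma hder_radial_profile_has_vector_derivative: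
  assumes coeff: "\<And>S x. S \<subseteq> {1..n} \<Longrightarrow> card S = k \<Longrightarrow> x \<noteq> 0 \<Longrightarrow>
                  f (fpairs S) x = (-1)^k * hder k (radial_profile f) ((norm x)\<^sup>2)"
    and k: "k \<le> n" and t: "t > 0"
  shows "(hder k (radial_profile f) has_vector_derivative hder (Suc k) (radial_profile f) t) (at t)"
proof -
  define e :: "real^'m" where "e = axis undefined 1"
  define S where "S = {1..k}"
  have S: "S \<subseteq> {1..n}" "card S = k" using k by (auto simp: S_def)
  define G where "G = f (fpairs S)"
  define y where "y = sqrt t *\<^sub>R e"
  have G_deriv: "(G has_derivative frechet_derivative G (at y)) (at y)"
    using diff[OF fpairs_subset[OF S(1)]] unfolding G_def by (simp add: frechet_derivative_works[symmetric])
  have "((\<lambda>\<tau>. sqrt \<tau> *\<^sub>R e) has_vector_derivative (inverse (sqrt t) / 2) *\<^sub>R e) (at t)"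
    using has_vector_derivative_scaleR[OF DERIV_real_sqrt[OF t] has_vector_derivative_const[of e]]
    by simp
  from vector_derivative_diff_chain_within[OF this, of G] G_deriv
  have G_sqrt_deriv: "((\<lambda>\<tau>. (-1)^k * G (sqrt \<tau> *\<^sub>R e)) has_vector_derivative
          (-1)^k * frechet_derivative G (at y) ((inverse (sqrt t) / 2) *\<^sub>R e)) (at t)"
    by (intro has_vector_derivative_mult_right) (simp add: y_def o_def has_derivative_at_withinI)
  have profile_eq: "(-1)^k * G (sqrt \<tau> *\<^sub>R e) = hder k (radial_profile f) \<tau>" if "\<tau> \<in> {0<..}" for \<tau>
    using coeff[OF S, of "sqrt \<tau> *\<^sub>R e"] that by (simp add: G_def e_def)
  have "(hder k (radial_profile f) has_vector_derivative
          (-1)^k * frechet_derivative G (at y) ((inverse (sqrt t) / 2) *\<^sub>R e)) (at t)"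
    by (rule has_vector_derivative_transform_within_open[OF G_sqrt_deriv open_greaterThan _ profile_eq])
       (use t in auto)
  then show ?thesis
    by (metis hder_Suc vector_derivative_at)
qed

lemma coeff_fpairs_Suc:
  assumes coeff: "\<And>S x. S \<subseteq> {1..n} \<Longrightarrow> card S = k \<Longrightarrow> x \<noteq> 0 \<Longrightarrow>
                  f (fpairs S) x = (-1)^k * hder k (radial_profile f) ((norm x)\<^sup>2)"
    and k: "k < n" and S': "S' \<subseteq> {1..n}" "card S' = Suc k" and x: "x \<noteq> 0"
  shows "f (fpairs S') x = (-1)^(Suc k) * hder (Suc k) (radial_profile f) ((norm x)\<^sup>2)"
proof -
  txt \<open>Compute \<partial>_i f_(fpairs S) twice: from the induction hypothesis by the chain rule, and
    by the generator relation bder_fpairs.\<close>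
  let ?h = "radial_profile f"
  obtain s where s: "s \<in> S'" using S'(2) by (metis card.empty ex_in_conv nat.distinct(1))
  define S where "S = S' - {s}"
  have S: "S \<subseteq> {1..n}" "card S = k" "s \<in> {1..n}" "s \<notin> S" "insert s S = S'"
    using S' s finite_subset[OF S'(1)] by (auto simp: S_def)
  obtain i where xi: "x$i \<noteq> 0" using x by (metis vec_eq_iff zero_index)
  have "(hder k ?h has_vector_derivative hder (Suc k) ?h ((norm x)\<^sup>2)) (at ((norm x)\<^sup>2))"
    by (rule hder_radial_profile_has_vector_derivative[OF coeff]) (use k x in auto)
  then have "((\<lambda>t. f (fpairs S) (x + t *\<^sub>R axis i 1)) has_vector_derivative
               (2 * x$i) *\<^sub>R ((-1)^k * hder (Suc k) ?h ((norm x)\<^sup>2))) (at 0)"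
    by (rule has_vector_derivative_along_axis_of_radial[OF has_vector_derivative_mult_right x])
       (rule coeff[OF S(1,2)])
  then have "bder i f (fpairs S) x = (2 * x$i) *\<^sub>R ((-1)^k * hder (Suc k) ?h ((norm x)\<^sup>2))"
    unfolding bder_def by (rule vector_derivative_at)
  moreover have "bder i f (fpairs S) x = -2 * of_real (x$i) * f (fpairs S') x"
    using bder_fpairs[OF S(1) S(3) S(4)] S(5) by simp
  ultimately have "of_real (x$i) * f (fpairs S') x
      = of_real (x$i) * (- ((-1)^k * hder (Suc k) ?h ((norm x)\<^sup>2)))"
    by (simp add: scaleR_conv_of_real algebra_simps) (metis minus_equation_iff)
  then have "f (fpairs S') x = - ((-1)^k * hder (Suc k) ?h ((norm x)\<^sup>2))"
    using xi by (metis mult_left_cancel of_real_eq_0_iff)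
  then show ?thesis by simp
qed
lemma coeff_fpairs:
  assumes m2: "CARD('m) \<ge> 2" and S: "S \<subseteq> {1..n}" and x: "x \<noteq> 0"
  shows "f (fpairs S) x = (-1)^card S * hder (card S) (radial_profile f) ((norm x)\<^sup>2)"
proof -
  have "k \<le> n \<Longrightarrow> S \<subseteq> {1..n} \<Longrightarrow> card S = k \<Longrightarrow> x \<noteq> 0 \<Longrightarrow>
          f (fpairs S) x = (-1)^k * hder k (radial_profile f) ((norm x)\<^sup>2)" for k S x
  proof (induction k arbitrary: S x)
    case 0
    then have "S = {}" using finite_subset[OF 0(2)] by auto
    then show ?case using coeff_empty_eq_radial_profile[OF m2 0(4)] by simp
  next
    case (Suc k)
    show ?case by (rule coeff_fpairs_Suc[OF Suc.IH]) (use Suc.prems in auto)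
  qed
  moreover have "card S \<le> n" using card_mono[OF _ S] by simp
  ultimately show ?thesis using S x by blast
qed

end

theorem theorem9:
  fixes f :: "'m::finite superfun" and n :: nat
  assumes m2: "CARD('m) \<ge> 2"
    and diff: "\<And>A x. A \<subseteq> {1..2*n} \<Longrightarrow> f A differentiable (at x)"
    and L0: "\<And>a b A x. sidx_valid n a \<Longrightarrow> sidx_valid n b \<Longrightarrow> A \<subseteq> {1..2*n} \<Longrightarrow>
               Lop a b f A x = 0"
  shows "\<exists>h :: real \<Rightarrow> complex.
           (\<forall>j<n. \<forall>t>0. hder j h differentiable (at t)) \<and>
           (\<forall>A x. A \<subseteq> {1..2*n} \<longrightarrow> x \<noteq> 0 \<longrightarrow>
              f A x = (\<Sum>j=0..n. ((-1) ^ j / of_nat (fact j)) *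
                         sf_pow (xgsq n) j A x * hder j h (\<Sum>i\<in>UNIV. (x $ i)\<^sup>2)))"
proof (intro exI conjI allI impI)
  let ?h = "radial_profile f"
  have coeff: "\<And>S x. S \<subseteq> {1..n} \<Longrightarrow> card S = k \<Longrightarrow> x \<noteq> 0 \<Longrightarrow>
                 f (fpairs S) x = (-1)^k * hder k ?h ((norm x)\<^sup>2)" for k
    using coeff_fpairs[OF diff L0 m2] by blast
  show "hder j ?h differentiable (at t)" if "j < n" "t > 0" for j t
    by (rule differentiableI_vector, rule hder_radial_profile_has_vector_derivative[OF diff L0 coeff])
       (use that in auto)
  fix A and x :: "real^'m"
  assume A: "A \<subseteq> {1..2*n}" and x: "x \<noteq> 0"
  have fin: "finite A" using A finite_subset by blast
  show "f A x = (\<Sum>j=0..n. ((-1) ^ j / of_nat (fact j)) *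
                   sf_pow (xgsq n) j A x * hder j ?h (\<Sum>i\<in>UNIV. (x $ i)\<^sup>2))"
  proof (cases "\<exists>S\<subseteq>{1..n}. A = fpairs S")
    case True
    then obtain S where S: "S \<subseteq> {1..n}" "A = fpairs S" by blast
    have "card S \<le> n" using card_mono[OF _ S(1)] by simp
    have "(\<Sum>j=0..n. ((-1) ^ j / of_nat (fact j)) *
                   sf_pow (xgsq n) j A x * hder j ?h (\<Sum>i\<in>UNIV. (x $ i)\<^sup>2))
        = (\<Sum>j=0..n. if j = card S then (-1)^card S * hder (card S) ?h ((norm x)\<^sup>2) else 0)"
      using S fin
      by (intro sum.cong refl) (simp add: xgsq_pow_coeff is_fpairs_of_card_fpairs sum_power2_eq_norm_power2)
    also have "\<dots> = f A x"
      using \<open>card S \<le> n\<close> coeff_fpairs[OF diff L0 m2 S(1) x] S(2) by simp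
    finally show ?thesis ..
  next
    case False
    have "f A x = 0"
      using coeff_zero_if_unpaired[OF diff L0 A _ _ x] unpaired_index_exists[OF A False] by blast
    moreover have "sf_pow (xgsq n) j A x = 0" for j
      using False fin by (auto simp: xgsq_pow_coeff is_fpairs_of_card_def)
    ultimately show ?thesis by simp
  qed
qed

end
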